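(* For all $x\ge 1$ and $n\ge x$, the $(x,x)$ edge-removal process on $n$ vertices always results in an $(x,x)$ task-dependency graph.
   Context: A task-dependency graph is a finite directed acyclic graph (no loops, no multiple edges). A vertex is initial if it has in-degree $0$ and terminal if it has out-degree $0$ (an isolated vertex is both). An $(x,y)$ task-dependency graph has exactly $x$ initial and exactly $y$ terminal vertices. The $(x,y)$ edge-removal process on $n$ vertices: start with the maximally connected task-dependency graph on vertex set $\{1,\dots,n\}$, having all edges $(a,b)$ with $a<b$. Edges are removed uniformly at random, one at a time; whenever a removal would cause the graph to have more than $x$ initial vertices or more than $y$ terminal vertices, the removal is cancelled. The process terminates when no further edge can be removed, and its result is the final graph. *)

theory Defs
  imports Main
begin

text \<open>A graph on vertex set {1..n} is represented by its edge set E :: (nat * nat) set.\<close>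

definition vertices :: "nat \<Rightarrow> nat set" where
  "vertices n = {1..n}"

definition full_edges :: "nat \<Rightarrow> (nat \<times> nat) set" where
  "full_edges n = {(a, b). a \<in> vertices n \<and> b \<in> vertices n \<and> a < b}"

definition initial_vertices :: "nat \<Rightarrow> (nat \<times> nat) set \<Rightarrow> nat set" where
  "initial_vertices n E = {v \<in> vertices n. \<not> (\<exists>u. (u, v) \<in> E)}"

definition terminal_vertices :: "nat \<Rightarrow> (nat \<times> nat) set \<Rightarrow> nat set" where
  "terminal_vertices n E = {v \<in> vertices n. \<not> (\<exists>w. (v, w) \<in> E)}"

definition task_dependency_graph :: "nat \<Rightarrow> (nat \<times> nat) set \<Rightarrow> bool" where
  "task_dependency_graph n E \<longleftrightarrow>
     E \<subseteq> vertices n \<times> vertices n \<and> acyclic E"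

definition xy_task_dependency_graph ::
  "nat \<Rightarrow> nat \<Rightarrow> nat \<Rightarrow> (nat \<times> nat) set \<Rightarrow> bool" where
  "xy_task_dependency_graph x y n E \<longleftrightarrow>
     task_dependency_graph n E \<and>
     card (initial_vertices n E) = x \<and> card (terminal_vertices n E) = y"

definition removal_allowed ::
  "nat \<Rightarrow> nat \<Rightarrow> nat \<Rightarrow> (nat \<times> nat) set \<Rightarrow> nat \<times> nat \<Rightarrow> bool" where
  "removal_allowed x y n E e \<longleftrightarrow>
     e \<in> E \<and> card (initial_vertices n (E - {e})) \<le> x
           \<and> card (terminal_vertices n (E - {e})) \<le> y"

definition removal_step ::
  "nat \<Rightarrow> nat \<Rightarrow> nat \<Rightarrow> (nat \<times> nat) set \<Rightarrow> (nat \<times> nat) set \<Rightarrow> bool" where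
  "removal_step x y n E E' \<longleftrightarrow> (\<exists>e. removal_allowed x y n E e \<and> E' = E - {e})"

definition removal_terminated :: "nat \<Rightarrow> nat \<Rightarrow> nat \<Rightarrow> (nat \<times> nat) set \<Rightarrow> bool" where
  "removal_terminated x y n E \<longleftrightarrow> \<not> (\<exists>e. removal_allowed x y n E e)"

text \<open>Possible results of the (x,y) edge-removal process on n vertices
  (every such result arises with positive probability).\<close>
definition possible_result :: "nat \<Rightarrow> nat \<Rightarrow> nat \<Rightarrow> (nat \<times> nat) set \<Rightarrow> bool" where
  "possible_result x y n E \<longleftrightarrow>
     (removal_step x y n)\<^sup>*\<^sup>* (full_edges n) E \<and> removal_terminated x y n E"

end

theory Submission
  imports Defs
begin

text \<open>Removing an edge (u, v) can only make v initial and u terminal, and it makes u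
  terminal only if (u, v) is the sole out-edge of u (dually for v). Hence both counts stay
  \<open>\<le> x\<close> along the process, and the result is a subgraph of the acyclic full graph. If at the
  end fewer than x vertices were initial, every edge would be blocked by the terminal count, so
  each edge would be the sole out-edge of its source; then there are at least as many sources
  as targets, i.e. at most as many terminal as initial vertices. With both counts below x every
  edge could be removed, so the graph would be empty and all \<open>n \<ge> x\<close> vertices initial.
  The terminal count is symmetric.\<close>

lemma finite_vertices [simp]: "finite (vertices n)"
  and card_vertices [simp]: "card (vertices n) = n"
  by (simp_all add: vertices_def)

lemma finite_initial_vertices [simp]: "finite (initial_vertices n E)"
  by (simp add: initial_vertices_def)

lemma finite_terminal_vertices [simp]: "finite (terminal_vertices n E)"
  by (simp add: terminal_vertices_def)

lemma card_initial_vertices: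
  assumes "E \<subseteq> vertices n \<times> vertices n"
  shows "card (initial_vertices n E) = n - card (snd ` E)"
proof -
  have "snd ` E \<subseteq> vertices n" using assms by auto
  moreover have "initial_vertices n E = vertices n - snd ` E"
    unfolding initial_vertices_def by force
  ultimately show ?thesis by (simp add: card_Diff_subset finite_subset)
qed

lemma card_terminal_vertices:
  assumes "E \<subseteq> vertices n \<times> vertices n"
  shows "card (terminal_vertices n E) = n - card (fst ` E)"
proof -
  have "fst ` E \<subseteq> vertices n" using assms by auto
  moreover have "terminal_vertices n E = vertices n - fst ` E"
    unfolding terminal_vertices_def by force
  ultimately show ?thesis by (simp add: card_Diff_subset finite_subset)
qed

lemma card_le_Suc_if_subset_insert: "finite A \<Longrightarrow> B \<subseteq> insert a A \<Longrightarrow> card B \<le> Suc (card A)"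
  by (metis card_insert_if card_mono finite_insert le_SucI)

lemma card_initial_vertices_Diff_le:
  "card (initial_vertices n (E - {(u, v)})) \<le> Suc (card (initial_vertices n E))"
  by (rule card_le_Suc_if_subset_insert) (auto simp: initial_vertices_def)

lemma card_terminal_vertices_Diff_le:
  "card (terminal_vertices n (E - {(u, v)})) \<le> Suc (card (terminal_vertices n E))"
  by (rule card_le_Suc_if_subset_insert) (auto simp: terminal_vertices_def)

lemma initial_vertices_Diff_subset:
  "(w, v) \<in> E \<Longrightarrow> w \<noteq> u \<Longrightarrow> initial_vertices n (E - {(u, v)}) \<subseteq> initial_vertices n E"
  unfolding initial_vertices_def by auto

lemma terminal_vertices_Diff_subset:
  "(u, w) \<in> E \<Longrightarrow> w \<noteq> v \<Longrightarrow> terminal_vertices n (E - {(u, v)}) \<subseteq> terminal_vertices n E"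
  unfolding terminal_vertices_def by auto

lemma full_edges_subset_less_than: "full_edges n \<subseteq> less_than"
  by (auto simp: full_edges_def)

lemma initial_vertices_full_edges: "initial_vertices n (full_edges n) \<subseteq> {1}"
proof
  fix v assume "v \<in> initial_vertices n (full_edges n)"
  then have "v \<in> vertices n" and "(1, v) \<notin> full_edges n"
    by (auto simp: initial_vertices_def)
  then show "v \<in> {1}" by (auto simp: full_edges_def vertices_def)
qed

lemma terminal_vertices_full_edges: "terminal_vertices n (full_edges n) \<subseteq> {n}"
  by (auto simp: terminal_vertices_def full_edges_def vertices_def)

lemma removal_process_invariant:
  assumes "(removal_step x y n)\<^sup>*\<^sup>* (full_edges n) E" and "1 \<le> x" and "1 \<le> y"
  shows "E \<subseteq> full_edges n \<and> card (initial_vertices n E) \<le> x \<and> card (terminal_vertices n E) \<le> y"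
  using assms(1)
proof induction
  case base
  have "card (initial_vertices n (full_edges n)) \<le> 1"
    using card_mono[OF _ initial_vertices_full_edges] by simp
  moreover have "card (terminal_vertices n (full_edges n)) \<le> 1"
    using card_mono[OF _ terminal_vertices_full_edges] by simp
  ultimately show ?case using assms(2,3) by simp
next
  case (step E E')
  then show ?case unfolding removal_step_def removal_allowed_def by auto
qed

lemma removal_allowed_if_both_below:
  assumes "e \<in> E" and "card (initial_vertices n E) < x" and "card (terminal_vertices n E) < y"
  shows "removal_allowed x y n E e"
proof -
  obtain u v where e: "e = (u, v)" by force
  show ?thesis
    using card_initial_vertices_Diff_le[of n E u v] card_terminal_vertices_Diff_le[of n E u v] assms
    unfolding removal_allowed_def e by simp
qed

lemma terminated_out_edge_unique:
  assumes "removal_terminated x y n E"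
    and "card (initial_vertices n E) < x" and "card (terminal_vertices n E) \<le> y"
    and "(u, v) \<in> E" and "(u, w) \<in> E"
  shows "v = w"
proof (rule ccontr)
  assume "v \<noteq> w"
  have "card (terminal_vertices n (E - {(u, v)})) \<le> y"
    using card_mono[OF _ terminal_vertices_Diff_subset[OF assms(5), of v n]] \<open>v \<noteq> w\<close> assms(3)
    by simp
  moreover have "card (initial_vertices n (E - {(u, v)})) \<le> x"
    using card_initial_vertices_Diff_le[of n E u v] assms(2) by linarith
  ultimately show False
    using assms(1,4) unfolding removal_terminated_def removal_allowed_def by blast
qed

lemma terminated_in_edge_unique:
  assumes "removal_terminated x y n E"
    and "card (terminal_vertices n E) < y" and "card (initial_vertices n E) \<le> x"
    and "(u, v) \<in> E" and "(w, v) \<in> E"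
  shows "u = w"
proof (rule ccontr)
  assume "u \<noteq> w"
  have "card (initial_vertices n (E - {(u, v)})) \<le> x"
    using card_mono[OF _ initial_vertices_Diff_subset[OF assms(5), of u n]] \<open>u \<noteq> w\<close> assms(3)
    by simp
  moreover have "card (terminal_vertices n (E - {(u, v)})) \<le> y"
    using card_terminal_vertices_Diff_le[of n E u v] assms(2) by linarith
  ultimately show False
    using assms(1,4) unfolding removal_terminated_def removal_allowed_def by blast
qed

lemma terminated_terminal_le_initial:
  assumes "removal_terminated x y n E" and "E \<subseteq> vertices n \<times> vertices n"
    and "card (initial_vertices n E) < x" and "card (terminal_vertices n E) \<le> y"
  shows "card (terminal_vertices n E) \<le> card (initial_vertices n E)"
proof -
  have "finite E" using finite_subset[OF assms(2)] by simp
  moreover have "inj_on fst E"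
    by (auto intro!: inj_onI dest: terminated_out_edge_unique[OF assms(1,3,4)])
  ultimately have "card (snd ` E) \<le> card (fst ` E)"
    by (simp add: card_image card_image_le)
  then show ?thesis using assms(2) by (simp add: card_initial_vertices card_terminal_vertices)
qed

lemma terminated_initial_le_terminal:
  assumes "removal_terminated x y n E" and "E \<subseteq> vertices n \<times> vertices n"
    and "card (terminal_vertices n E) < y" and "card (initial_vertices n E) \<le> x"
  shows "card (initial_vertices n E) \<le> card (terminal_vertices n E)"
proof -
  have "finite E" using finite_subset[OF assms(2)] by simp
  moreover have "inj_on snd E"
    by (auto intro!: inj_onI dest: terminated_in_edge_unique[OF assms(1,3,4)])
  ultimately have "card (fst ` E) \<le> card (snd ` E)"
    by (simp add: card_image card_image_le)
  then show ?thesis using assms(2) by (simp add: card_initial_vertices card_terminal_vertices)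
qed

lemma terminated_counts_below_imp_empty:
  "removal_terminated x y n E \<Longrightarrow> card (initial_vertices n E) < x
    \<Longrightarrow> card (terminal_vertices n E) < y \<Longrightarrow> E = {}"
  using removal_allowed_if_both_below unfolding removal_terminated_def by blast

lemma terminated_card_initial_terminal_vertices:
  assumes "removal_terminated x x n E" and "E \<subseteq> vertices n \<times> vertices n" and "x \<le> n"
    and "card (initial_vertices n E) \<le> x" and "card (terminal_vertices n E) \<le> x"
  shows "card (initial_vertices n E) = x" and "card (terminal_vertices n E) = x"
proof -
  have not_both_below: False
    if "card (initial_vertices n E) < x" and "card (terminal_vertices n E) < x"
  proof -
    have "E = {}" using terminated_counts_below_imp_empty[OF assms(1) that] .
    then have "card (initial_vertices n E) = n" using card_initial_vertices[OF assms(2)] by simp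
    with that(1) assms(3) show False by simp
  qed
  show "card (initial_vertices n E) = x"
  proof (rule ccontr)
    assume "card (initial_vertices n E) \<noteq> x"
    with assms(4) have initial_below: "card (initial_vertices n E) < x" by simp
    with terminated_terminal_le_initial[OF assms(1,2) initial_below assms(5)] not_both_below
    show False by simp
  qed
  show "card (terminal_vertices n E) = x"
  proof (rule ccontr)
    assume "card (terminal_vertices n E) \<noteq> x"
    with assms(5) have terminal_below: "card (terminal_vertices n E) < x" by simp
    with terminated_initial_le_terminal[OF assms(1,2) terminal_below assms(4)] not_both_below
    show False by simp
  qed
qed

lemma acyclic_if_subset_full_edges: "E \<subseteq> full_edges n \<Longrightarrow> acyclic E"
  using wf_acyclic[OF wf_less_than] subset_trans[OF _ full_edges_subset_less_than]
  by (rule acyclic_subset)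

theorem mainTheorem4:
  fixes x n :: nat and E :: "(nat \<times> nat) set"
  assumes "1 \<le> x" and "x \<le> n"
    and "possible_result x x n E"
  shows "xy_task_dependency_graph x x n E"
proof -
  have reachable: "(removal_step x x n)\<^sup>*\<^sup>* (full_edges n) E"
    and terminated: "removal_terminated x x n E"
    using assms(3) unfolding possible_result_def by simp_all
  have inv: "E \<subseteq> full_edges n" "card (initial_vertices n E) \<le> x"
      "card (terminal_vertices n E) \<le> x"
    using removal_process_invariant[OF reachable assms(1) assms(1)] by simp_all
  have "E \<subseteq> vertices n \<times> vertices n"
    using inv(1) by (auto simp: full_edges_def)
  with terminated_card_initial_terminal_vertices[OF terminated _ assms(2) inv(2,3)]
    acyclic_if_subset_full_edges[OF inv(1)]
  show ?thesis by (simp add: xy_task_dependency_graph_def task_dependency_graph_def)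
qed

end
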